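(* For all $C,\delta>0$ there are $\varepsilon>0$ and $n_0\in\mathbb N$ such that every $C$-bipartite-Ramsey graph $G=(V_1,V_2,E)$ with $|V_1|,|V_2|\ge n_0$ is $(\delta,\varepsilon)$-bipartite-rich.
   Context: A bipartite graph $G=(V_1,V_2,E)$ has vertex set $V_1\sqcup V_2$ and edge set $E\subset V_1\times V_2$; $N(v)$ is the neighbourhood of $v$ and $\overline{N}(v)$ its complement in the opposite class. Given $C>0$, $G$ is called $C$-bipartite-Ramsey if for all integers $t_1\ge C\log_2|V_1|$ and $t_2\ge C\log_2|V_2|$ there are no $T_1\subset V_1$, $T_2\subset V_2$ with $|T_1|=t_1$, $|T_2|=t_2$ such that all pairs in $T_1\times T_2$ are edges, or all are non-edges. Given $\delta,\varepsilon>0$, $G$ is $(\delta,\varepsilon)$-bipartite-rich if for each $i\in\{1,2\}$: for every $W\subset V_i$ with $|W|\ge\delta|V_i|$, there are at most $|V_{3-i}|^{1/5}$ vertices $v\in V_{3-i}$ such that $|N(v)\cap W|\le\varepsilon|W|$ or $|\overline{N}(v)\cap W|<\varepsilon|W|$. *)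

theory Defs
  imports Complex_Main
begin

text \<open>Bipartite graph: classes V1, V2 (finite) and edge set E with E a subset of V1 x V2.
  Vertices are natural numbers (every finite bipartite graph is isomorphic to such a one).\<close>

definition bip_graph :: "nat set \<Rightarrow> nat set \<Rightarrow> (nat \<times> nat) set \<Rightarrow> bool" where
  "bip_graph V1 V2 E \<longleftrightarrow> finite V1 \<and> finite V2 \<and> E \<subseteq> V1 \<times> V2"

definition bip_ramsey :: "real \<Rightarrow> nat set \<Rightarrow> nat set \<Rightarrow> (nat \<times> nat) set \<Rightarrow> bool" where
  "bip_ramsey C V1 V2 E \<longleftrightarrow>
     (\<forall>t1 t2 :: nat. real t1 \<ge> C * log 2 (card V1) \<and> real t2 \<ge> C * log 2 (card V2) \<longrightarrow>
        \<not> (\<exists>T1 T2. T1 \<subseteq> V1 \<and> T2 \<subseteq> V2 \<and> card T1 = t1 \<and> card T2 = t2 \<and>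
              ((T1 \<times> T2 \<subseteq> E) \<or> (T1 \<times> T2) \<inter> E = {})))"

definition rich_side :: "real \<Rightarrow> real \<Rightarrow> nat set \<Rightarrow> nat set \<Rightarrow> (nat \<times> nat) set \<Rightarrow> bool" where
  "rich_side \<delta> \<epsilon> X Y R \<longleftrightarrow>
     (\<forall>W. W \<subseteq> X \<and> real (card W) \<ge> \<delta> * real (card X) \<longrightarrow>
        real (card {y \<in> Y. real (card {x \<in> W. (x, y) \<in> R}) \<le> \<epsilon> * real (card W)
                        \<or> real (card {x \<in> W. (x, y) \<notin> R}) < \<epsilon> * real (card W)})
          \<le> real (card Y) powr (1/5))"

definition bip_rich :: "real \<Rightarrow> real \<Rightarrow> nat set \<Rightarrow> nat set \<Rightarrow> (nat \<times> nat) set \<Rightarrow> bool" where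
  "bip_rich \<delta> \<epsilon> V1 V2 E \<longleftrightarrow>
     rich_side \<delta> \<epsilon> V1 V2 E \<and> rich_side \<delta> \<epsilon> V2 V1 ((\<lambda>(a, b). (b, a)) ` E)"

end

theory Submission
  imports Defs "HOL-Real_Asymp.Real_Asymp"
begin

(* Let a = ceil (C log2 |V1|) and b = ceil (C log2 |V2|); the Ramsey property forbids homogeneous
   a x b rectangles (and b x a ones in the other orientation).

   First, |V1| is only polynomial in |V2|: splitting V1 in halves 2b times along vertices of V2
   leaves a set of size >= |V1| / 4^b that is homogeneous to 2b vertices of V2, b of them of the
   same kind, so |V1| < a * 4^b.  Since a <= sqrt |V1| for large |V1|, this gives
   log2 |V1| < 4b, hence a <= 4 C b + 1 = O(C^2 log2 |V2|).

   Second, let B be a set of vertices y with at most eps |W| neighbours in W.  Choosing a vertices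
   of W greedily, each of degree at most 2 eps |T| into the current set T (by averaging) and
   keeping only its non-neighbours in T, yields an empty a x ((1 - 2 eps)^a |B|) rectangle.  With
   q = 1 - 2 eps = 2 powr (-1 / (40 C^2)) the bound on a gives q^a >= q^(4C+1) |V2|^(-1/10), so
   |B| >= |V2|^(1/5) / 2 would produce an empty a x b rectangle.  The same argument applied to the
   complement of E handles vertices with few non-neighbours. *)

definition homogeneous_rect :: "('a \<times> 'b) set \<Rightarrow> 'a set \<Rightarrow> 'b set \<Rightarrow> bool" where
  "homogeneous_rect R S T \<longleftrightarrow> S \<times> T \<subseteq> R \<or> S \<times> T \<inter> R = {}"

definition no_homogeneous_rect :: "nat \<Rightarrow> nat \<Rightarrow> 'a set \<Rightarrow> 'b set \<Rightarrow> ('a \<times> 'b) set \<Rightarrow> bool" where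
  "no_homogeneous_rect a b X Y R \<longleftrightarrow>
     (\<forall>S T. S \<subseteq> X \<longrightarrow> T \<subseteq> Y \<longrightarrow> card S = a \<longrightarrow> card T = b \<longrightarrow> \<not> homogeneous_rect R S T)"

lemma homogeneous_rect_subset:
  "homogeneous_rect R S T \<Longrightarrow> S' \<subseteq> S \<Longrightarrow> T' \<subseteq> T \<Longrightarrow> homogeneous_rect R S' T'"
  unfolding homogeneous_rect_def by blast

lemma homogeneous_rect_swap:
  "homogeneous_rect ((\<lambda>(x, y). (y, x)) ` R) T S \<longleftrightarrow> homogeneous_rect R S T"
  unfolding homogeneous_rect_def by auto

lemma no_homogeneous_rect_swap:
  "no_homogeneous_rect a b X Y R \<Longrightarrow> no_homogeneous_rect b a Y X ((\<lambda>(x, y). (y, x)) ` R)"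
  unfolding no_homogeneous_rect_def homogeneous_rect_swap by blast

lemma no_homogeneous_rect_Compl [simp]:
  "no_homogeneous_rect a b X Y (- R) \<longleftrightarrow> no_homogeneous_rect a b X Y R"
  unfolding no_homogeneous_rect_def homogeneous_rect_def by blast

lemma no_homogeneous_rect_mono:
  assumes "no_homogeneous_rect a b X Y R" "W \<subseteq> X"
  shows "no_homogeneous_rect a b W Y R"
  unfolding no_homogeneous_rect_def
proof (intro allI impI)
  fix S T assume "S \<subseteq> W" "T \<subseteq> Y" "card S = a" "card T = b"
  then show "\<not> homogeneous_rect R S T"
    using assms(1)[unfolded no_homogeneous_rect_def, rule_format, of S T] assms(2) by blast
qed

lemma no_homogeneous_rectD:
  assumes "no_homogeneous_rect a b X Y R" "S \<subseteq> X" "T \<subseteq> Y" "a \<le> card S" "b \<le> card T"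
  shows "\<not> homogeneous_rect R S T"
proof
  assume hom: "homogeneous_rect R S T"
  obtain S' where S': "S' \<subseteq> S" "card S' = a" using obtain_subset_with_card_n[OF assms(4)] by metis
  obtain T' where T': "T' \<subseteq> T" "card T' = b" using obtain_subset_with_card_n[OF assms(5)] by metis
  have "homogeneous_rect R S' T'" using homogeneous_rect_subset[OF hom S'(1) T'(1)] .
  moreover have "\<not> homogeneous_rect R S' T'"
    using assms(1)[unfolded no_homogeneous_rect_def, rule_format, of S' T'] S' T' assms(2,3) by blast
  ultimately show False by contradiction
qed

lemma card_filter_add_card_filter_not:
  assumes "finite A"
  shows "card {x\<in>A. P x} + card {x\<in>A. \<not> P x} = card A"
proof -
  have "{x\<in>A. P x} \<union> {x\<in>A. \<not> P x} = A" "{x\<in>A. P x} \<inter> {x\<in>A. \<not> P x} = {}" by blast+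
  then show ?thesis using assms by (metis card_Un_disjoint finite_Un)
qed

lemma obtain_half_homogeneous_to_vertex:
  assumes "finite X"
  obtains Z where "Z \<subseteq> X" "card X \<le> 2 * card Z" "homogeneous_rect R Z {y}"
proof -
  let ?N = "{x\<in>X. (x, y) \<in> R}" and ?M = "{x\<in>X. (x, y) \<notin> R}"
  have "card ?N + card ?M = card X" using assms by (rule card_filter_add_card_filter_not)
  then have "card X \<le> 2 * card ?N \<or> card X \<le> 2 * card ?M" by linarith
  moreover have "homogeneous_rect R ?N {y}" "homogeneous_rect R ?M {y}"
    unfolding homogeneous_rect_def by auto
  ultimately show ?thesis using that[of ?N] that[of ?M] by blast
qed

lemma exists_large_subset_homogeneous_to_vertices:
  fixes R :: "('a \<times> 'b) set"
  assumes "finite X" "finite Y" "k \<le> card Y"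
  shows "\<exists>S X'. S \<subseteq> Y \<and> card S = k \<and> X' \<subseteq> X \<and> card X \<le> 2 ^ k * card X' \<and>
                 (\<forall>y\<in>S. homogeneous_rect R X' {y})"
  using assms(3)
proof (induction k)
  case 0
  show ?case by (intro exI[of _ "{}"] exI[of _ X]) auto
next
  case (Suc k)
  then obtain S X' where S: "S \<subseteq> Y" "card S = k" and X': "X' \<subseteq> X" "card X \<le> 2 ^ k * card X'"
    and hom: "\<forall>y\<in>S. homogeneous_rect R X' {y}"
    by auto
  have "S \<noteq> Y" using S Suc.prems by auto
  then obtain y where y: "y \<in> Y" "y \<notin> S" using S by blast
  obtain Z where Z: "Z \<subseteq> X'" "card X' \<le> 2 * card Z" "homogeneous_rect R Z {y}"
    using obtain_half_homogeneous_to_vertex[of X'] X' assms(1) finite_subset by metis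
  have "card (insert y S) = Suc k" using S y assms(2) finite_subset by fastforce
  moreover have "card X \<le> 2 ^ Suc k * card Z"
    using order_trans[OF X'(2) mult_le_mono2[OF Z(2)]] by simp
  moreover have "\<forall>y'\<in>insert y S. homogeneous_rect R Z {y'}"
    using hom Z homogeneous_rect_subset by blast
  ultimately show ?case using S y Z X' by (intro exI[of _ "insert y S"] exI[of _ Z]) auto
qed

lemma card_lt_of_no_homogeneous_rect:
  assumes "finite X" "finite Y" "no_homogeneous_rect a b X Y R" "2 * b \<le> card Y"
  shows "card X < a * 4 ^ b"
proof -
  obtain S X' where S: "S \<subseteq> Y" "card S = 2 * b"
    and X': "X' \<subseteq> X" "card X \<le> 2 ^ (2 * b) * card X'"
    and hom: "\<forall>y\<in>S. homogeneous_rect R X' {y}"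
    using exists_large_subset_homogeneous_to_vertices[OF assms(1,2,4)] by blast
  define S\<^sub>1 where "S\<^sub>1 = {y\<in>S. X' \<times> {y} \<subseteq> R}"
  define S\<^sub>0 where "S\<^sub>0 = {y\<in>S. X' \<times> {y} \<inter> R = {}}"
  have "S \<subseteq> S\<^sub>1 \<union> S\<^sub>0" using hom unfolding S\<^sub>1_def S\<^sub>0_def homogeneous_rect_def by auto
  moreover have "finite (S\<^sub>1 \<union> S\<^sub>0)"
    by (rule finite_subset[OF _ finite_subset[OF S(1) assms(2)]]) (auto simp: S\<^sub>1_def S\<^sub>0_def)
  ultimately have "card S \<le> card (S\<^sub>1 \<union> S\<^sub>0)" by (intro card_mono)
  also have "\<dots> \<le> card S\<^sub>1 + card S\<^sub>0" by (rule card_Un_le)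
  finally have "b \<le> card S\<^sub>1 \<or> b \<le> card S\<^sub>0" using S(2) by linarith
  moreover have "homogeneous_rect R X' S\<^sub>1" "homogeneous_rect R X' S\<^sub>0"
    unfolding S\<^sub>1_def S\<^sub>0_def homogeneous_rect_def by auto
  moreover have "S\<^sub>1 \<subseteq> Y" "S\<^sub>0 \<subseteq> Y" using S unfolding S\<^sub>1_def S\<^sub>0_def by auto
  ultimately have "\<not> a \<le> card X'" using no_homogeneous_rectD[OF assms(3) X'(1)] by blast
  have "card X \<le> 4 ^ b * card X'" using X'(2) by (simp add: power_mult)
  also have "\<dots> < 4 ^ b * a" using \<open>\<not> a \<le> card X'\<close> by simp
  finally show ?thesis by (simp add: mult.commute)
qed

lemma exists_vertex_of_small_degree:
  fixes R :: "('a \<times> 'b) set" and e :: real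
  assumes "finite W" "finite T" "A \<subseteq> W" "A \<noteq> {}" "card W \<le> 2 * card A" "0 \<le> e"
    and deg: "\<forall>y\<in>T. card {x\<in>W. (x, y) \<in> R} \<le> e * card W"
  shows "\<exists>x\<in>A. card {y\<in>T. (x, y) \<in> R} \<le> 2 * e * card T"
proof (rule ccontr)
  assume all_large: "\<not> ?thesis"
  have fA: "finite A" using assms(1,3) finite_subset by blast
  have "(\<Sum>_\<in>A. 2 * e * card T) < (\<Sum>x\<in>A. real (card {y\<in>T. (x, y) \<in> R}))"
    by (rule sum_strict_mono[OF fA \<open>A \<noteq> {}\<close>]) (use all_large in auto)
  then have "card A * (2 * e * card T) < (\<Sum>x\<in>A. real (card {y\<in>T. (x, y) \<in> R}))"
    by simp
  also have "\<dots> = (\<Sum>y\<in>T. real (card {x\<in>A. (x, y) \<in> R}))"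
    using sum_multicount_gen[OF fA assms(2), of "\<lambda>x y. (x, y) \<in> R"] by (simp flip: of_nat_sum)
  also have "\<dots> \<le> card T * (e * card W)"
  proof (rule sum_bounded_above)
    fix y assume "y \<in> T"
    have "card {x\<in>A. (x, y) \<in> R} \<le> card {x\<in>W. (x, y) \<in> R}"
      using assms(1,3) by (intro card_mono) auto
    then show "real (card {x\<in>A. (x, y) \<in> R}) \<le> e * card W" using deg \<open>y \<in> T\<close> by force
  qed
  also have "\<dots> \<le> card A * (2 * e * card T)"
    using assms(5,6) mult_left_mono[of "real (card W)" "2 * card A" "e * card T"] by (simp add: algebra_simps)
  finally show False by simp
qed

lemma exists_empty_rect_of_low_degrees:
  fixes R :: "('a \<times> 'b) set" and e :: real
  assumes "finite W" "finite B" "0 \<le> e" "e \<le> 1/2" "2 * k \<le> card W"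
    and deg: "\<forall>y\<in>B. card {x\<in>W. (x, y) \<in> R} \<le> e * card W"
  shows "\<exists>S T. S \<subseteq> W \<and> card S = k \<and> T \<subseteq> B \<and> (1 - 2 * e) ^ k * card B \<le> card T \<and>
               S \<times> T \<inter> R = {}"
  using assms(5)
proof (induction k)
  case 0
  show ?case by (intro exI[of _ "{}"] exI[of _ B]) auto
next
  case (Suc k)
  then obtain S T where S: "S \<subseteq> W" "card S = k" and T: "T \<subseteq> B"
    and card_T: "(1 - 2 * e) ^ k * card B \<le> card T" and empty: "S \<times> T \<inter> R = {}"
    by auto
  have fT: "finite T" using T assms(2) finite_subset by blast
  have card_rest: "card (W - S) = card W - k"
    using S card_Diff_subset[OF finite_subset[OF S(1) assms(1)] S(1)] by simp
  then have "0 < card (W - S)" "card W \<le> 2 * card (W - S)" using Suc.prems by auto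
  then have "W - S \<noteq> {}" "card W \<le> 2 * card (W - S)" using card_gt_0_iff by blast+
  then obtain x where x: "x \<in> W - S" and deg_x: "card {y\<in>T. (x, y) \<in> R} \<le> 2 * e * card T"
    using exists_vertex_of_small_degree[OF assms(1) fT Diff_subset _ _ assms(3)] deg T by blast
  define T' where "T' = {y\<in>T. (x, y) \<notin> R}"
  have "card {y\<in>T. (x, y) \<in> R} + card T' = card T"
    unfolding T'_def using fT by (rule card_filter_add_card_filter_not)
  then have "(1 - 2 * e) * card T \<le> card T'" using deg_x by (simp add: algebra_simps)
  moreover have "(1 - 2 * e) ^ Suc k * card B \<le> (1 - 2 * e) * card T"
    using mult_left_mono[OF card_T, of "1 - 2 * e"] assms(4) by simp
  moreover have "card (insert x S) = Suc k" using S x assms(1) finite_subset by fastforce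
  ultimately show ?case
    using S T x empty by (intro exI[of _ "insert x S"] exI[of _ T']) (auto simp: T'_def)
qed

lemma card_low_degree_lt:
  fixes R :: "('a \<times> 'b) set" and e :: real
  assumes "finite W" "finite Y" "0 \<le> e" "e \<le> 1/2" "2 * a \<le> card W"
    and "no_homogeneous_rect a b W Y R"
  shows "(1 - 2 * e) ^ a * card {y\<in>Y. card {x\<in>W. (x, y) \<in> R} \<le> e * card W} < b"
    (is "_ * real (card ?L) < _")
proof -
  have "\<exists>S T. S \<subseteq> W \<and> card S = a \<and> T \<subseteq> ?L \<and> (1 - 2 * e) ^ a * card ?L \<le> card T \<and>
               S \<times> T \<inter> R = {}"
    by (rule exists_empty_rect_of_low_degrees[OF assms(1) _ assms(3-5)]) (use assms(2) in auto)
  then obtain S T where "S \<subseteq> W" "card S = a" "T \<subseteq> ?L"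
    and card_T: "(1 - 2 * e) ^ a * card ?L \<le> card T" and "S \<times> T \<inter> R = {}"
    by blast
  moreover from \<open>T \<subseteq> ?L\<close> have "T \<subseteq> Y" by blast
  ultimately have "\<not> b \<le> card T"
    using no_homogeneous_rectD[OF assms(6)] unfolding homogeneous_rect_def by blast
  then show ?thesis using card_T by linarith
qed

definition ramsey_threshold :: "real \<Rightarrow> nat \<Rightarrow> nat" where
  "ramsey_threshold C n = nat \<lceil>C * log 2 n\<rceil>"

lemma bip_ramsey_no_homogeneous_rect:
  assumes "bip_ramsey C V1 V2 E"
  shows "no_homogeneous_rect (ramsey_threshold C (card V1)) (ramsey_threshold C (card V2)) V1 V2 E"
  unfolding no_homogeneous_rect_def homogeneous_rect_def ramsey_threshold_def
proof (intro allI impI)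
  fix S T
  assume "S \<subseteq> V1" "T \<subseteq> V2" "card S = nat \<lceil>C * log 2 (card V1)\<rceil>" "card T = nat \<lceil>C * log 2 (card V2)\<rceil>"
  moreover from this have "C * log 2 (card V1) \<le> card S" "C * log 2 (card V2) \<le> card T"
    using real_nat_ceiling_ge by simp_all
  ultimately show "\<not> (S \<times> T \<subseteq> E \<or> S \<times> T \<inter> E = {})"
    using assms unfolding bip_ramsey_def by blast
qed

lemma ramsey_threshold_le:
  assumes "0 \<le> C" "1 \<le> n"
  shows "ramsey_threshold C n \<le> C * log 2 n + 1"
proof -
  have "0 \<le> C * log 2 n" using assms by simp
  then show ?thesis
    unfolding ramsey_threshold_def using of_int_ceiling_le_add_one[of "C * log 2 n"] by linarith
qed

definition ramsey_large :: "real \<Rightarrow> real \<Rightarrow> real \<Rightarrow> nat \<Rightarrow> bool" where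
  "ramsey_large C \<delta> c n \<longleftrightarrow>
     1 \<le> n \<and> C * log 2 n + 1 \<le> sqrt n \<and> 2 * (C * log 2 n + 1) \<le> \<delta> * n \<and>
     2 * (C * log 2 n + 1) \<le> n \<and> C * log 2 n + 1 \<le> c * n powr (1/10)"

lemma eventually_ramsey_large:
  assumes "0 < C" "0 < \<delta>" "0 < c"
  shows "eventually (ramsey_large C \<delta> c) at_top"
  unfolding ramsey_large_def using assms by (intro eventually_conj) real_asymp+

lemma log_lt_of_lt_sqrt_mult_pow:
  fixes n a :: real
  assumes "0 < n" "a \<le> sqrt n" "n < a * 4 ^ k"
  shows "log 2 n < 4 * real k"
proof -
  have "a * 4 ^ k \<le> sqrt n * 4 ^ k" by (rule mult_right_mono[OF assms(2)]) simp
  moreover have "sqrt n * sqrt n = n" using assms(1) by simp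
  ultimately have "sqrt n * sqrt n < sqrt n * 4 ^ k" using assms(3) by linarith
  then have "sqrt n < 4 ^ k" by (rule mult_left_less_imp_less) (use assms(1) in simp)
  then have "n < 4 ^ k * 4 ^ k"
    using assms(1) mult_strict_mono[of "sqrt n" "4 ^ k" "sqrt n" "4 ^ k"] by simp
  also have "(4::real) ^ k * 4 ^ k = 2 ^ (4 * k)"
    by (simp add: power_mult flip: power_mult_distrib)
  also have "\<dots> = 2 powr (4 * k)"
    by (simp add: powr_realpow flip: of_nat_mult)
  finally show ?thesis using assms(1) by (simp add: log_less_iff)
qed

lemma powr_lower_bound_of_exponent_le:
  fixes C q a b n :: real
  assumes "0 < C" "q = 2 powr (- 1 / (40 * C\<^sup>2))" "1 \<le> n"
    and "a \<le> 4 * C * b + 1" "b \<le> C * log 2 n + 1"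
  shows "q powr (4 * C + 1) * n powr (- 1 / 10) \<le> q powr a"
proof -
  have q: "0 < q" "q \<le> 1"
    using assms(1,2) powr_less_one[of 2 "- 1 / (40 * C\<^sup>2)"] by auto
  have "q powr (4 * C\<^sup>2 * log 2 n) = 2 powr (log 2 n * (- 1 / 10))"
    using assms(1,2) by (simp add: powr_powr power2_eq_square)
  also have "\<dots> = (2 powr log 2 n) powr (- 1 / 10)" by (rule powr_powr[symmetric])
  also have "\<dots> = n powr (- 1 / 10)" using assms(3) by simp
  finally have "q powr (4 * C + 1) * n powr (- 1 / 10) = q powr (4 * C + 1 + 4 * C\<^sup>2 * log 2 n)"
    by (simp add: powr_add)
  also have "\<dots> = q powr (4 * C * (C * log 2 n + 1) + 1)"
    by (simp add: algebra_simps power2_eq_square)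
  also have "\<dots> \<le> q powr (4 * C * b + 1)"
    using q assms(1,5) by (intro powr_mono') auto
  also have "\<dots> \<le> q powr a"
    using q assms(4) by (intro powr_mono') auto
  finally show ?thesis .
qed

lemma ramsey_threshold_le_pow_mult_powr:
  fixes C \<delta> q :: real and m n :: nat
  assumes "0 < C" and q_def: "q = 2 powr (- 1 / (40 * C\<^sup>2))"
    and large_m: "ramsey_large C \<delta> (q powr (4 * C + 1) / 2) m"
    and large_n: "ramsey_large C \<delta> (q powr (4 * C + 1) / 2) n"
    and "m < ramsey_threshold C m * 4 ^ ramsey_threshold C n"
  shows "ramsey_threshold C n \<le> q ^ ramsey_threshold C m * n powr (1/5) / 2"
proof -
  define a b where "a = ramsey_threshold C m" and "b = ramsey_threshold C n"
  have q: "0 < q" using q_def by simp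
  have a: "a \<le> C * log 2 m + 1" "a \<le> sqrt m"
    using ramsey_threshold_le[of C m] large_m assms(1) unfolding a_def ramsey_large_def by auto
  have b: "b \<le> C * log 2 n + 1"
    using ramsey_threshold_le[of C n] large_n assms(1) unfolding b_def ramsey_large_def by auto
  have "real m < a * 4 ^ b"
    using assms(5) unfolding a_def b_def by (metis of_nat_less_iff of_nat_mult of_nat_numeral of_nat_power)
  then have "log 2 m < 4 * real b"
    using log_lt_of_lt_sqrt_mult_pow[of m a b] a(2) large_m unfolding ramsey_large_def by simp
  then have "C * log 2 m \<le> C * (4 * real b)" using assms(1) by (intro mult_left_mono) auto
  then have "a \<le> 4 * C * b + 1" using a(1) by linarith
  then have "q powr (4 * C + 1) * n powr (- 1 / 10) \<le> q powr a"
    using powr_lower_bound_of_exponent_le[OF assms(1) q_def _ _ b] large_n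
    unfolding ramsey_large_def by simp
  then have "q powr (4 * C + 1) * n powr (- 1 / 10) \<le> q ^ a"
    using q by (simp add: powr_realpow)
  then have lower:
      "q powr (4 * C + 1) * n powr (- 1 / 10) * (n powr (1/5) / 2) \<le> q ^ a * (n powr (1/5) / 2)"
    by (rule mult_right_mono) simp
  have "n powr (- 1 / 10) * n powr (1/5) = n powr (1/10)"
    using large_n unfolding ramsey_large_def by (simp flip: powr_add)
  then have "q powr (4 * C + 1) * n powr (- 1 / 10) * (n powr (1/5) / 2) =
      q powr (4 * C + 1) / 2 * n powr (1/10)"
    by (metis (no_types, opaque_lifting) mult.assoc mult.commute times_divide_eq_right)
  then have "q powr (4 * C + 1) / 2 * n powr (1/10) \<le> q ^ a * n powr (1/5) / 2"
    using lower by linarith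
  then show ?thesis
    using b large_n unfolding a_def b_def ramsey_large_def by linarith
qed

lemma rich_side_if_no_homogeneous_rect:
  fixes C \<delta> q :: real and X Y :: "nat set" and R :: "(nat \<times> nat) set"
  assumes "0 < C" and q_def: "q = 2 powr (- 1 / (40 * C\<^sup>2))" and "finite X" "finite Y"
    and no_hom: "no_homogeneous_rect (ramsey_threshold C (card X)) (ramsey_threshold C (card Y)) X Y R"
    and large_X: "ramsey_large C \<delta> (q powr (4 * C + 1) / 2) (card X)"
    and large_Y: "ramsey_large C \<delta> (q powr (4 * C + 1) / 2) (card Y)"
  shows "rich_side \<delta> ((1 - q) / 2) X Y R"
proof -
  define a b where "a = ramsey_threshold C (card X)" and "b = ramsey_threshold C (card Y)"
  have q: "0 < q" "q < 1" using q_def assms(1) by (auto intro: powr_less_one)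
  have "2 * a \<le> \<delta> * card X"
    using ramsey_threshold_le[of C "card X"] large_X assms(1) unfolding a_def ramsey_large_def by auto
  have "2 * b \<le> card Y"
    using ramsey_threshold_le[of C "card Y"] large_Y assms(1) unfolding b_def ramsey_large_def by auto
  then have "card X < a * 4 ^ b"
    using card_lt_of_no_homogeneous_rect[OF assms(3,4) no_hom[folded a_def b_def]] by blast
  then have threshold: "b \<le> q ^ a * card Y powr (1/5) / 2"
    using ramsey_threshold_le_pow_mult_powr[OF assms(1) q_def large_X large_Y] unfolding a_def b_def by blast
  have few_low:
      "2 * card {y\<in>Y. card {x\<in>W. (x, y) \<in> R'} \<le> (1 - q) / 2 * card W} < card Y powr (1/5)"
    if "W \<subseteq> X" "\<delta> * card X \<le> card W" "no_homogeneous_rect a b X Y R'" for W R'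
  proof -
    have "2 * a \<le> card W" using \<open>2 * a \<le> \<delta> * card X\<close> that(2) by linarith
    then have "(1 - 2 * ((1 - q) / 2)) ^ a *
        card {y\<in>Y. card {x\<in>W. (x, y) \<in> R'} \<le> (1 - q) / 2 * card W} < b"
      using q by (intro card_low_degree_lt no_homogeneous_rect_mono[OF that(3,1)]
          finite_subset[OF that(1) assms(3)] assms(4)) auto
    moreover have "1 - 2 * ((1 - q) / 2) = q" by (simp add: field_simps)
    ultimately have "q ^ a * card {y\<in>Y. card {x\<in>W. (x, y) \<in> R'} \<le> (1 - q) / 2 * card W} < b"
      by (simp only:)
    also have "\<dots> \<le> q ^ a * (card Y powr (1/5) / 2)" using threshold by simp
    finally show ?thesis using q(1) by simp
  qed
  have no_hom_ab: "no_homogeneous_rect a b X Y R" "no_homogeneous_rect a b X Y (- R)"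
    using no_hom unfolding a_def b_def by simp_all
  show ?thesis
    unfolding rich_side_def
  proof (intro allI impI, elim conjE)
    fix W assume W: "W \<subseteq> X" "\<delta> * card X \<le> card W"
    let ?low = "\<lambda>R'. {y\<in>Y. card {x\<in>W. (x, y) \<in> R'} \<le> (1 - q) / 2 * card W}"
    let ?bad = "{y\<in>Y. card {x\<in>W. (x, y) \<in> R} \<le> (1 - q) / 2 * card W \<or>
                      card {x\<in>W. (x, y) \<notin> R} < (1 - q) / 2 * card W}"
    have "?bad \<subseteq> ?low R \<union> ?low (- R)" by auto
    moreover have "finite (?low R \<union> ?low (- R))" using assms(4) by simp
    ultimately have "card ?bad \<le> card (?low R \<union> ?low (- R))" by (rule card_mono[rotated])
    also have "\<dots> \<le> card (?low R) + card (?low (- R))" by (rule card_Un_le)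
    finally have "real (card ?bad) \<le> card (?low R) + card (?low (- R))" by linarith
    then show "real (card ?bad) \<le> card Y powr (1/5)"
      using few_low[OF W no_hom_ab(1)] few_low[OF W no_hom_ab(2)] by linarith
  qed
qed

theorem lemma2p5:
  fixes C \<delta> :: real
  assumes "C > 0" and "\<delta> > 0"
  shows "\<exists>\<epsilon> > 0. \<exists>n0 :: nat. \<forall>V1 V2 E.
           bip_graph V1 V2 E \<and> bip_ramsey C V1 V2 E \<and> card V1 \<ge> n0 \<and> card V2 \<ge> n0
           \<longrightarrow> bip_rich \<delta> \<epsilon> V1 V2 E"
proof -
  define q where "q = 2 powr (- 1 / (40 * C\<^sup>2))"
  have q: "0 < q" "q < 1" using q_def assms(1) by (auto intro: powr_less_one)
  obtain n0 where large: "\<And>n. n \<ge> n0 \<Longrightarrow> ramsey_large C \<delta> (q powr (4 * C + 1) / 2) n"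
    using eventually_ramsey_large[OF assms] q(1) unfolding eventually_at_top_linorder by force
  show ?thesis
  proof (intro exI[of _ "(1 - q) / 2"] conjI exI[of _ n0] allI impI)
    show "(1 - q) / 2 > 0" using q(2) by simp
    fix V1 V2 E
    assume "bip_graph V1 V2 E \<and> bip_ramsey C V1 V2 E \<and> card V1 \<ge> n0 \<and> card V2 \<ge> n0"
    then have "finite V1" "finite V2"
      and no_hom: "no_homogeneous_rect (ramsey_threshold C (card V1)) (ramsey_threshold C (card V2)) V1 V2 E"
      and "ramsey_large C \<delta> (q powr (4 * C + 1) / 2) (card V1)"
      and "ramsey_large C \<delta> (q powr (4 * C + 1) / 2) (card V2)"
      using bip_ramsey_no_homogeneous_rect large unfolding bip_graph_def by auto
    then show "bip_rich \<delta> ((1 - q) / 2) V1 V2 E"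
      unfolding bip_rich_def
      using rich_side_if_no_homogeneous_rect[OF assms(1) q_def] no_homogeneous_rect_swap[OF no_hom]
      by blast
  qed
qed

end
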